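(* Assume (A1)–(A6) and (B1)–(B5). Let $y\in\mathbf K(\operatorname{dom}\mathcal R)$, let $\delta_n>0$ with $\delta_n\to0$, let $y_n\in\mathbb Y$ with $\mathcal D(y,y_n)\le\delta_n$, choose $\alpha_n>0$ with $\alpha_n\to0$ and $\delta_n/\alpha_n\to0$, and let $x_n\in\operatorname{arg\,min}\mathcal A_{\alpha_n,y_n}$. Then: (a) $(x_n)$ has at least one weakly convergent subsequence; (b) every weak accumulation point of $(x_n)$ is an $\mathcal R$-minimizing solution of $\mathbf Kx=y$; (c) for every weakly convergent subsequence $x_{\tau(n)}\rightharpoonup x_\star$ one has $\mathcal R(x_{\tau(n)})\to\mathcal R(x_\star)$; (d) if the $\mathcal R$-minimizing solution $x^\ddagger$ of $\mathbf Kx=y$ is unique, then $x_n\rightharpoonup x^\ddagger$.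
   Context: Standing assumptions (A1)–(A6): (A1) $\mathbb X,\mathbb Y$ real Hilbert spaces; (A2) $\Xi=\ell^2(\Lambda)$, $\Lambda$ countable; (A3) $\mathbf K\colon\mathbb X\to\mathbb Y$ weakly sequentially continuous; (A4) $\mathbf E\colon\mathbb X\to\Xi$ weakly sequentially continuous; (A5) $\mathbf D\colon\Xi\to\mathbb X$ weakly sequentially continuous; (A6) $\psi\colon\Xi\to[0,\infty]$ coercive (bounded values force bounded sequences) and weakly sequentially lower semicontinuous. Fix $c>0$ and set $\mathcal R(x)=\psi(\mathbf E(x))+\frac c2\|x-\mathbf D(\mathbf E(x))\|^2$, $\operatorname{dom}\mathcal R=\{x:\mathcal R(x)<\infty\}$, and $\mathcal A_{\alpha,y}(x)=\mathcal D(\mathbf Kx,y)+\alpha\mathcal R(x)$. An $\mathcal R$-minimizing solution of $\mathbf Kx=y$ is an element of $\operatorname{arg\,min}\{\mathcal R(x): x\in\operatorname{dom}\mathcal R,\ \mathbf Kx=y\}$. Similarity measure $\mathcal D\colon\mathbb Y\times\mathbb Y\to[0,\infty]$ with: (B1) $\mathcal D(y_0,y_1)=0\iff y_0=y_1$; (B2) sequential lower semicontinuity w.r.t. the weak topology in the first and the norm topology in the second argument; (B3) $\mathcal D(y,y_n)\to0\Rightarrow y_n\to y$; (B4) if $\mathcal D(y,y_n)\to0$ then $\mathcal D(z,y_n)\to\mathcal D(z,y)$ for every $z$ with $\mathcal D(z,y)<\infty$; (B5) for all $y$, $\alpha>0$ there is $x$ with $\mathcal A_{\alpha,y}(x)<\infty$.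 *)

theory Defs
  imports "HOL-Analysis.Analysis"
begin

definition weak_conv :: "(nat \<Rightarrow> 'a::real_inner) \<Rightarrow> 'a \<Rightarrow> bool" where
  "weak_conv xs x \<longleftrightarrow> (\<forall>z. (\<lambda>n. inner (xs n) z) \<longlonglongrightarrow> inner x z)"

definition weak_seq_cont :: "('a::real_inner \<Rightarrow> 'b::real_inner) \<Rightarrow> bool" where
  "weak_seq_cont F \<longleftrightarrow> (\<forall>xs x. weak_conv xs x \<longrightarrow> weak_conv (\<lambda>n. F (xs n)) (F x))"

definition weak_seq_lsc :: "('a::real_inner \<Rightarrow> ennreal) \<Rightarrow> bool" where
  "weak_seq_lsc f \<longleftrightarrow> (\<forall>xs x. weak_conv xs x \<longrightarrow> f x \<le> liminf (\<lambda>n. f (xs n)))"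

definition coercive_fun :: "('a::real_normed_vector \<Rightarrow> ennreal) \<Rightarrow> bool" where
  "coercive_fun f \<longleftrightarrow> (\<forall>xs. (\<exists>C::real. \<forall>n::nat. f (xs n) \<le> ennreal C) \<longrightarrow> (\<exists>M. \<forall>n. norm (xs n) \<le> M))"

definition weak_acc_point :: "(nat \<Rightarrow> 'a::real_inner) \<Rightarrow> 'a \<Rightarrow> bool" where
  "weak_acc_point xs x \<longleftrightarrow> (\<exists>\<tau>. strict_mono \<tau> \<and> weak_conv (xs \<circ> \<tau>) x)"

definition regR :: "('c \<Rightarrow> ennreal) \<Rightarrow> ('a \<Rightarrow> 'c) \<Rightarrow> ('c \<Rightarrow> 'a::real_normed_vector) \<Rightarrow> real \<Rightarrow> 'a \<Rightarrow> ennreal" where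
  "regR \<psi> E Dec c x = \<psi> (E x) + ennreal (c / 2 * (norm (x - Dec (E x)))\<^sup>2)"

definition domR :: "('c \<Rightarrow> ennreal) \<Rightarrow> ('a \<Rightarrow> 'c) \<Rightarrow> ('c \<Rightarrow> 'a::real_normed_vector) \<Rightarrow> real \<Rightarrow> 'a set" where
  "domR \<psi> E Dec c = {x. regR \<psi> E Dec c x < \<infinity>}"

definition tikh :: "('y \<Rightarrow> 'y \<Rightarrow> ennreal) \<Rightarrow> ('a \<Rightarrow> 'y) \<Rightarrow> ('c \<Rightarrow> ennreal) \<Rightarrow> ('a \<Rightarrow> 'c)
    \<Rightarrow> ('c \<Rightarrow> 'a::real_normed_vector) \<Rightarrow> real \<Rightarrow> real \<Rightarrow> 'y \<Rightarrow> 'a \<Rightarrow> ennreal" where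
  "tikh Dist K \<psi> E Dec c \<alpha> y x = Dist (K x) y + ennreal \<alpha> * regR \<psi> E Dec c x"

definition argmin :: "('a \<Rightarrow> ennreal) \<Rightarrow> 'a set" where
  "argmin f = {x. \<forall>z. f x \<le> f z}"

definition R_min_sol :: "('a \<Rightarrow> 'y) \<Rightarrow> ('c \<Rightarrow> ennreal) \<Rightarrow> ('a \<Rightarrow> 'c) \<Rightarrow> ('c \<Rightarrow> 'a::real_normed_vector)
    \<Rightarrow> real \<Rightarrow> 'y \<Rightarrow> 'a \<Rightarrow> bool" where
  "R_min_sol K \<psi> E Dec c y x \<longleftrightarrow>
     x \<in> domR \<psi> E Dec c \<and> K x = y \<and>
     (\<forall>z. z \<in> domR \<psi> E Dec c \<and> K z = y \<longrightarrow> regR \<psi> E Dec c x \<le> regR \<psi> E Dec c z)"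

end

theory Submission
  imports Defs "HOL-Library.Diagonal_Subsequence"
begin

text \<open>
  Comparing \<open>x\<^sub>n\<close> with an exact solution \<open>z\<close> in the Tikhonov functional gives
  \<open>R(x\<^sub>n) \<le> \<delta>\<^sub>n/\<alpha>\<^sub>n + R(z)\<close> and \<open>D(Kx\<^sub>n, y\<^sub>n) \<le> \<delta>\<^sub>n + \<alpha>\<^sub>n R(z)\<close>. The first bound keeps
  \<open>R(x\<^sub>n)\<close> bounded, so coercivity of \<open>\<psi>\<close> bounds \<open>Ex\<^sub>n\<close> and the penalty bounds
  \<open>x\<^sub>n - DEx\<^sub>n\<close>; weak sequential compactness of bounded sets in a Hilbert space (obtained from
  the Riesz representation theorem on closed subspaces) and weak continuity of \<open>D\<close> then yield a
  weakly convergent subsequence of \<open>x\<^sub>n = (x\<^sub>n - DEx\<^sub>n) + DEx\<^sub>n\<close>. Along a weakly convergent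
  subsequence, lower semicontinuity of \<open>D\<close> and the second bound give \<open>Kx\<^sub>\<star> = y\<close>, while lower
  semicontinuity of \<open>R\<close> and the first bound give
  \<open>R(x\<^sub>\<star>) \<le> liminf R(x\<^sub>n) \<le> limsup R(x\<^sub>n) \<le> R(z)\<close> for every solution \<open>z\<close>; taking
  \<open>z = x\<^sub>\<star>\<close> yields convergence of \<open>R(x\<^sub>n)\<close>. If the \<open>R\<close>-minimizing solution is unique, every
  subsequence has a further subsequence converging weakly to it, hence so does the whole sequence.
\<close>

section \<open>Riesz representation on closed subspaces\<close>

lemma parallelogram_law:
  fixes a b :: "'a::real_inner"
  shows "(norm (a - b))\<^sup>2 + (norm (a + b))\<^sup>2 = 2 * (norm a)\<^sup>2 + 2 * (norm b)\<^sup>2"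
  by (simp add: power2_norm_eq_inner inner_add_left inner_add_right inner_diff_left
      inner_diff_right inner_commute)

lemma norm_add_scaleR_power2:
  fixes x v :: "'a::real_inner"
  shows "(norm (x + t *\<^sub>R v))\<^sup>2 = (norm x)\<^sup>2 + 2 * t * inner x v + t\<^sup>2 * (norm v)\<^sup>2"
  unfolding power2_norm_eq_inner
  by (simp add: inner_add_left inner_add_right inner_commute power2_eq_square algebra_simps)

lemma linear_coeff_zero_if_quadratic_nonneg:
  fixes a b :: real
  assumes "b \<ge> 0" and nonneg: "\<And>t. 2 * t * a + t\<^sup>2 * b \<ge> 0"
  shows "a = 0"
proof -
  define t where "t = - a / (b + 2)"
  have "(b + 2)\<^sup>2 * (2 * t * a + t\<^sup>2 * b) = 2 * a * (t * (b + 2)) * (b + 2) + (t * (b + 2))\<^sup>2 * b"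
    by (simp add: power2_eq_square algebra_simps)
  also have "t * (b + 2) = - a"
    using \<open>b \<ge> 0\<close> by (simp add: t_def)
  finally have "(b + 2)\<^sup>2 * (2 * t * a + t\<^sup>2 * b) = - (a\<^sup>2 * (b + 4))"
    by (simp add: power2_eq_square algebra_simps)
  moreover have "(b + 2)\<^sup>2 * (2 * t * a + t\<^sup>2 * b) \<ge> 0"
    using nonneg by simp
  ultimately have "a\<^sup>2 * (b + 4) \<le> 0"
    by linarith
  with \<open>b \<ge> 0\<close> show ?thesis
    by (simp add: mult_le_0_iff)
qed

lemma Cauchy_if_norm_diff_power2_le:
  fixes s :: "nat \<Rightarrow> 'a::real_normed_vector"
  assumes "e \<longlonglongrightarrow> 0" and le: "\<And>i j. (norm (s i - s j))\<^sup>2 \<le> e i + e j"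
  shows "Cauchy s"
proof (rule metric_CauchyI)
  fix \<epsilon> :: real
  assume "\<epsilon> > 0"
  then obtain N where N: "\<And>n. n \<ge> N \<Longrightarrow> e n < \<epsilon>\<^sup>2 / 2"
    using order_tendstoD(2)[OF assms(1), of "\<epsilon>\<^sup>2 / 2"] by (auto simp: eventually_sequentially)
  show "\<exists>M. \<forall>i\<ge>M. \<forall>j\<ge>M. dist (s i) (s j) < \<epsilon>"
  proof (intro exI allI impI)
    fix i j
    assume "N \<le> i" "N \<le> j"
    then have "(norm (s i - s j))\<^sup>2 < \<epsilon>\<^sup>2"
      using le[of i j] N[of i] N[of j] by linarith
    then show "dist (s i) (s j) < \<epsilon>"
      using \<open>\<epsilon> > 0\<close> by (simp add: dist_norm power_less_imp_less_base)
  qed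
qed

definition riesz_energy :: "('a::real_inner \<Rightarrow> real) \<Rightarrow> 'a \<Rightarrow> real" where
  "riesz_energy f s = (norm s)\<^sup>2 - 2 * f s"

context
  fixes S :: "'a::{real_inner, complete_space} set" and f :: "'a \<Rightarrow> real" and B :: real
  assumes subspace: "subspace S"
    and additive: "\<And>a b. a \<in> S \<Longrightarrow> b \<in> S \<Longrightarrow> f (a + b) = f a + f b"
    and homogeneous: "\<And>a r. a \<in> S \<Longrightarrow> f (r *\<^sub>R a) = r * f a"
    and bounded: "\<And>a. a \<in> S \<Longrightarrow> \<bar>f a\<bar> \<le> B * norm a"
begin

lemma subspace_functional_diff:
  assumes "a \<in> S" "b \<in> S"
  shows "f (a - b) = f a - f b"
proof -
  have "(- 1) *\<^sub>R b \<in> S"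
    using subspace assms by (simp add: subspace_neg)
  then show ?thesis
    using additive[of a "(- 1) *\<^sub>R b"] homogeneous[of b "- 1"] assms by simp
qed

lemma subspace_functional_tendsto:
  assumes "\<And>k. s k \<in> S" "x \<in> S" "s \<longlonglongrightarrow> x"
  shows "(\<lambda>k. f (s k)) \<longlonglongrightarrow> f x"
proof -
  have "(\<lambda>k. norm (s k - x)) \<longlonglongrightarrow> 0"
    using \<open>s \<longlonglongrightarrow> x\<close> by (simp add: tendsto_norm_zero_iff LIM_zero_iff)
  then have lim: "(\<lambda>k. \<bar>B\<bar> * norm (s k - x)) \<longlonglongrightarrow> 0"
    using tendsto_mult_right_zero by blast
  have bound: "norm (f (s k) - f x) \<le> \<bar>B\<bar> * norm (s k - x)" for k
  proof -
    have "s k - x \<in> S"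
      using subspace assms by (simp add: subspace_diff)
    then have "\<bar>f (s k - x)\<bar> \<le> B * norm (s k - x)"
      by (rule bounded)
    also have "\<dots> \<le> \<bar>B\<bar> * norm (s k - x)"
      by (simp add: mult_right_mono)
    finally show ?thesis
      using subspace_functional_diff assms by simp
  qed
  have "(\<lambda>k. f (s k) - f x) \<longlonglongrightarrow> 0"
    using always_eventually[OF allI[OF bound]] lim by (rule Lim_null_comparison)
  then show ?thesis
    by (simp add: LIM_zero_iff)
qed

lemma riesz_energy_midpoint:
  assumes "a \<in> S" "b \<in> S"
  shows "(norm (a - b))\<^sup>2
    = 2 * riesz_energy f a + 2 * riesz_energy f b - 4 * riesz_energy f ((1/2) *\<^sub>R (a + b))"
proof -
  have "f ((1/2) *\<^sub>R (a + b)) = (f a + f b) / 2"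
    using homogeneous[of "a + b" "1/2"] additive assms subspace by (simp add: subspace_add)
  moreover have "(norm ((1/2) *\<^sub>R (a + b)))\<^sup>2 = (norm (a + b))\<^sup>2 / 4"
    by (simp add: power_divide)
  ultimately show ?thesis
    unfolding riesz_energy_def using parallelogram_law[of a b] by (simp add: field_simps)
qed

lemma riesz_energy_lower_bound:
  assumes "s \<in> S"
  shows "- B\<^sup>2 \<le> riesz_energy f s"
proof -
  have "f s \<le> \<bar>B\<bar> * norm s"
    using bounded[OF assms] by (smt (verit) mult_right_mono norm_ge_zero)
  moreover have "0 \<le> (norm s - \<bar>B\<bar>)\<^sup>2"
    by simp
  ultimately show ?thesis
    by (simp add: riesz_energy_def power2_eq_square algebra_simps)
qed

text \<open>A minimizing sequence of the energy is Cauchy by the midpoint identity.\<close>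
lemma riesz_energy_attains_min:
  assumes "closed S"
  shows "\<exists>x\<in>S. \<forall>s\<in>S. riesz_energy f x \<le> riesz_energy f s"
proof -
  define m where "m = Inf (riesz_energy f ` S)"
  have m_le: "m \<le> riesz_energy f s" if "s \<in> S" for s
    unfolding m_def using riesz_energy_lower_bound that by (auto intro!: cInf_lower bdd_belowI)
  have "\<exists>s\<in>S. riesz_energy f s < m + 1 / Suc k" for k
    using cInf_lessD[of "riesz_energy f ` S" "m + 1 / Suc k"] subspace_0[OF subspace]
    by (auto simp: m_def)
  then obtain s where s: "\<And>k. s k \<in> S" and s_min: "\<And>k. riesz_energy f (s k) < m + 1 / Suc k"
    by metis
  have "(norm (s i - s j))\<^sup>2 \<le> 2 / Suc i + 2 / Suc j" for i j
  proof -
    have "(1/2) *\<^sub>R (s i + s j) \<in> S"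
      using subspace s by (simp add: subspace_add subspace_mul)
    then have "m \<le> riesz_energy f ((1/2) *\<^sub>R (s i + s j))"
      by (rule m_le)
    then show ?thesis
      using riesz_energy_midpoint[OF s s, of i j] s_min[of i] s_min[of j] by linarith
  qed
  moreover have "(\<lambda>k. 2 / real (Suc k)) \<longlonglongrightarrow> 0"
    using tendsto_mult[OF tendsto_const LIMSEQ_inverse_real_of_nat, of 2] by (simp add: divide_inverse)
  ultimately have "Cauchy s"
    by (intro Cauchy_if_norm_diff_power2_le)
  then obtain x where sx: "s \<longlonglongrightarrow> x"
    using Cauchy_convergent_iff convergent_def by blast
  have "x \<in> S"
    using \<open>closed S\<close> s sx closed_sequentially by blast
  have "(\<lambda>k. riesz_energy f (s k)) \<longlonglongrightarrow> riesz_energy f x"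
    unfolding riesz_energy_def
    using sx subspace_functional_tendsto[OF s \<open>x \<in> S\<close> sx] by (intro tendsto_intros)
  moreover have "(\<lambda>k. riesz_energy f (s k)) \<longlonglongrightarrow> m"
  proof (rule tendsto_sandwich[of "\<lambda>k. m" _ _ "\<lambda>k. m + 1 / Suc k"])
    show "\<forall>\<^sub>F k in sequentially. m \<le> riesz_energy f (s k)"
      by (intro always_eventually allI m_le s)
    show "\<forall>\<^sub>F k in sequentially. riesz_energy f (s k) \<le> m + 1 / Suc k"
      by (intro always_eventually allI less_imp_le s_min)
    show "(\<lambda>k. m + 1 / real (Suc k)) \<longlonglongrightarrow> m"
      using tendsto_add[OF tendsto_const LIMSEQ_inverse_real_of_nat, of m] by (simp add: inverse_eq_divide)
  qed simp
  ultimately have "riesz_energy f x = m"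
    using LIMSEQ_unique by blast
  with \<open>x \<in> S\<close> m_le show ?thesis
    by auto
qed

lemma riesz_energy_argmin_represents:
  assumes "x \<in> S" and min: "\<And>s. s \<in> S \<Longrightarrow> riesz_energy f x \<le> riesz_energy f s" and "v \<in> S"
  shows "inner x v = f v"
proof -
  have "inner x v - f v = 0"
  proof (rule linear_coeff_zero_if_quadratic_nonneg[of "(norm v)\<^sup>2"])
    fix t
    have "x + t *\<^sub>R v \<in> S"
      using subspace assms by (simp add: subspace_add subspace_mul)
    moreover have "f (x + t *\<^sub>R v) = f x + t * f v"
      using additive homogeneous subspace assms by (simp add: subspace_mul)
    ultimately show "2 * t * (inner x v - f v) + t\<^sup>2 * (norm v)\<^sup>2 \<ge> 0"
      using min[of "x + t *\<^sub>R v"] by (simp add: riesz_energy_def norm_add_scaleR_power2 algebra_simps)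
  qed simp
  then show ?thesis
    by simp
qed

lemma riesz_representation_on_subspace:
  assumes "closed S"
  shows "\<exists>x\<in>S. \<forall>s\<in>S. inner x s = f s"
proof -
  obtain x where "x \<in> S" and "\<And>s. s \<in> S \<Longrightarrow> riesz_energy f x \<le> riesz_energy f s"
    using riesz_energy_attains_min[OF assms] by blast
  then show ?thesis
    by (intro bexI[of _ x] ballI riesz_energy_argmin_represents)
qed

end

section \<open>Weak sequential compactness of bounded sequences\<close>

lemma bounded_seq_inner_convergent_subseq:
  fixes u :: "nat \<Rightarrow> 'a::real_inner"
  assumes bd: "\<And>n. norm (u n) \<le> M"
  shows "\<exists>\<sigma>. strict_mono \<sigma> \<and> (\<forall>k. convergent (\<lambda>n. inner (u (\<sigma> n)) (u k)))"
proof -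
  interpret subseqs "\<lambda>k s. convergent (\<lambda>n. inner (u (s n)) (u k))"
  proof unfold_locales
    fix k and s :: "nat \<Rightarrow> nat"
    have "norm (inner (u (s n)) (u k)) \<le> M * norm (u k)" for n
      using Cauchy_Schwarz_ineq2[of "u (s n)" "u k"] bd[of "s n"]
      by (simp add: mult_right_mono order_trans)
    then have "bounded (range (\<lambda>n. inner (u (s n)) (u k)))"
      unfolding bounded_iff by blast
    then obtain l r where "strict_mono r" "((\<lambda>n. inner (u (s n)) (u k)) \<circ> r) \<longlonglongrightarrow> l"
      using bounded_imp_convergent_subsequence by blast
    then show "\<exists>r'. strict_mono r' \<and> convergent (\<lambda>n. inner (u ((s \<circ> r') n)) (u k))"
      by (auto simp: convergent_def o_def)
  qed
  have "convergent (\<lambda>n. inner (u (diagseq n)) (u k))" for k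
  proof -
    have "convergent (\<lambda>n. inner (u ((diagseq \<circ> (+) (Suc k)) n)) (u k))"
    proof (rule diagseq_holds)
      fix r s n
      assume "strict_mono (r :: nat \<Rightarrow> nat)" "convergent (\<lambda>m. inner (u (s m)) (u n))"
      then show "convergent (\<lambda>m. inner (u ((s \<circ> r) m)) (u n))"
        using LIMSEQ_subseq_LIMSEQ by (auto simp: convergent_def o_def)
    qed
    then show ?thesis
      using LIMSEQ_offset[of "\<lambda>n. inner (u (diagseq n)) (u k)" "Suc k"]
      by (auto simp: convergent_def o_def add.commute)
  qed
  then show ?thesis
    using subseq_diagseq by blast
qed

lemma subspace_convergent_inner: "subspace {z. convergent (\<lambda>n. inner (v n) z)}"
  unfolding subspace_def
  by (auto simp: inner_add_right convergent_add convergent_const convergent_mult_const_iff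
      intro: convergent_mult)

lemma closed_convergent_inner:
  fixes v :: "nat \<Rightarrow> 'a::real_inner"
  assumes bd: "\<And>n. norm (v n) \<le> M"
  shows "closed {z. convergent (\<lambda>n. inner (v n) z)}"
proof (unfold closed_sequential_limits, intro allI impI, elim conjE)
  fix zs z
  assume zs: "\<forall>k. zs k \<in> {z. convergent (\<lambda>n. inner (v n) z)}" and "zs \<longlonglongrightarrow> z"
  have "M \<ge> 0"
    using bd[of 0] norm_ge_zero[of "v 0"] by linarith
  have "Cauchy (\<lambda>n. inner (v n) z)"
  proof (rule metric_CauchyI)
    fix e :: real
    assume "e > 0"
    moreover have "e / (3 * (M + 1)) > 0"
      using \<open>e > 0\<close> \<open>M \<ge> 0\<close> by simp
    ultimately obtain k where k: "norm (zs k - z) < e / (3 * (M + 1))"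
      using LIMSEQ_D[OF \<open>zs \<longlonglongrightarrow> z\<close>] by blast
    have close: "\<bar>inner (v i) z - inner (v i) (zs k)\<bar> \<le> e / 3" for i
    proof -
      have "\<bar>inner (v i) z - inner (v i) (zs k)\<bar> \<le> norm (v i) * norm (z - zs k)"
        using Cauchy_Schwarz_ineq2[of "v i" "z - zs k"] by (simp add: inner_diff_right)
      also have "\<dots> \<le> (M + 1) * (e / (3 * (M + 1)))"
        using bd[of i] k \<open>M \<ge> 0\<close> by (intro mult_mono) (auto simp: norm_minus_commute)
      also have "\<dots> = e / 3"
        using \<open>M \<ge> 0\<close> by (simp add: field_simps)
      finally show ?thesis .
    qed
    have "Cauchy (\<lambda>n. inner (v n) (zs k))"
      using zs by (simp add: Cauchy_convergent_iff)
    moreover have "e / 3 > 0"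
      using \<open>e > 0\<close> by simp
    ultimately obtain N where N: "\<And>i j. i \<ge> N \<Longrightarrow> j \<ge> N \<Longrightarrow>
        dist (inner (v i) (zs k)) (inner (v j) (zs k)) < e / 3"
      using metric_CauchyD by blast
    show "\<exists>N. \<forall>i\<ge>N. \<forall>j\<ge>N. dist (inner (v i) z) (inner (v j) z) < e"
    proof (intro exI allI impI)
      fix i j
      assume "N \<le> i" "N \<le> j"
      then show "dist (inner (v i) z) (inner (v j) z) < e"
        using N[of i j] close[of i] close[of j] unfolding dist_real_def by linarith
    qed
  qed
  then show "z \<in> {z. convergent (\<lambda>n. inner (v n) z)}"
    by (simp add: Cauchy_convergent_iff)
qed

lemma convergent_inner_limit_represented:
  fixes v :: "nat \<Rightarrow> 'a::{real_inner, complete_space}"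
  assumes v_bd: "\<And>n. norm (v n) \<le> M"
  defines "G \<equiv> {z. convergent (\<lambda>n. inner (v n) z)}"
  shows "\<exists>x\<in>G. \<forall>s\<in>G. (\<lambda>n. inner (v n) s) \<longlonglongrightarrow> inner x s"
proof -
  define f where "f z = lim (\<lambda>n. inner (v n) z)" for z
  have G: "subspace G" "closed G"
    unfolding G_def by (rule subspace_convergent_inner, rule closed_convergent_inner[OF v_bd])
  have f: "(\<lambda>n. inner (v n) z) \<longlonglongrightarrow> f z" if "z \<in> G" for z
    using that unfolding G_def f_def by (simp add: convergent_LIMSEQ_iff)
  have "\<exists>x\<in>G. \<forall>s\<in>G. inner x s = f s"
  proof (rule riesz_representation_on_subspace[OF G(1) _ _ _ G(2), where B = M])
    fix a b
    assume "a \<in> G" "b \<in> G"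
    have "(\<lambda>n. inner (v n) (a + b)) \<longlonglongrightarrow> f a + f b"
      using tendsto_add[OF f[OF \<open>a \<in> G\<close>] f[OF \<open>b \<in> G\<close>]] by (simp add: inner_add_right)
    then show "f (a + b) = f a + f b"
      unfolding f_def by (rule limI)
  next
    fix a r
    assume "a \<in> G"
    have "(\<lambda>n. inner (v n) (r *\<^sub>R a)) \<longlonglongrightarrow> r * f a"
      using tendsto_mult[OF tendsto_const f[OF \<open>a \<in> G\<close>], of r] by simp
    then show "f (r *\<^sub>R a) = r * f a"
      unfolding f_def by (rule limI)
  next
    fix a
    assume "a \<in> G"
    have "\<bar>inner (v n) a\<bar> \<le> M * norm a" for n
      using Cauchy_Schwarz_ineq2[of "v n" a] mult_right_mono[OF v_bd[of n] norm_ge_zero[of a]]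
      by linarith
    then show "\<bar>f a\<bar> \<le> M * norm a"
      by (intro LIMSEQ_le_const2[OF tendsto_rabs[OF f[OF \<open>a \<in> G\<close>]]]) blast
  qed
  then obtain x where "x \<in> G" and x: "\<And>s. s \<in> G \<Longrightarrow> inner x s = f s"
    by blast
  then show ?thesis
    using f by (intro bexI[of _ x] ballI) simp_all
qed

text \<open>
  A test vector \<open>z\<close> acts on the sequence like its representative on the closed subspace \<open>G\<close>
  of convergence directions (its orthogonal projection), and \<open>G\<close> contains the sequence itself.
\<close>
lemma bounded_imp_weak_conv_subseq:
  fixes u :: "nat \<Rightarrow> 'a::{real_inner, complete_space}"
  assumes bd: "\<And>n. norm (u n) \<le> M"
  shows "\<exists>\<sigma> x. strict_mono \<sigma> \<and> weak_conv (u \<circ> \<sigma>) x"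
proof -
  obtain \<sigma> where \<sigma>: "strict_mono \<sigma>" and conv: "\<And>k. convergent (\<lambda>n. inner (u (\<sigma> n)) (u k))"
    using bounded_seq_inner_convergent_subseq[of u M] bd by blast
  define v where "v = u \<circ> \<sigma>"
  define G where "G = {z. convergent (\<lambda>n. inner (v n) z)}"
  have vG: "v n \<in> G" for n
    unfolding G_def v_def using conv by simp
  have v_bd: "norm (v n) \<le> M" for n
    using bd by (simp add: v_def)
  have G: "subspace G" "closed G"
    unfolding G_def by (rule subspace_convergent_inner, rule closed_convergent_inner[OF v_bd])
  obtain x where "x \<in> G" and x: "\<And>s. s \<in> G \<Longrightarrow> (\<lambda>n. inner (v n) s) \<longlonglongrightarrow> inner x s"
    using convergent_inner_limit_represented[of v M, OF v_bd] unfolding G_def by blast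
  have "weak_conv v x"
    unfolding weak_conv_def
  proof
    fix z
    have "\<exists>p\<in>G. \<forall>s\<in>G. inner p s = inner z s"
      by (rule riesz_representation_on_subspace[OF G(1) _ _ _ G(2), where B = "norm z"])
        (simp_all add: inner_add_right Cauchy_Schwarz_ineq2)
    then obtain p where "p \<in> G" and p: "\<And>s. s \<in> G \<Longrightarrow> inner p s = inner z s"
      by blast
    have "inner (v n) z = inner (v n) p" for n
      using p[OF vG] by (simp add: inner_commute)
    moreover have "inner x p = inner x z"
      using p[OF \<open>x \<in> G\<close>] by (simp add: inner_commute)
    ultimately show "(\<lambda>n. inner (v n) z) \<longlonglongrightarrow> inner x z"
      using x[OF \<open>p \<in> G\<close>] by simp
  qed
  with \<sigma> show ?thesis
    unfolding v_def by (intro exI[of _ \<sigma>] exI[of _ x] conjI)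
qed

lemma weak_conv_subseq:
  assumes "weak_conv xs x" "strict_mono r"
  shows "weak_conv (xs \<circ> r) x"
  using assms LIMSEQ_subseq_LIMSEQ[of _ _ r] unfolding weak_conv_def by (auto simp: o_def)

lemma weak_conv_add:
  assumes "weak_conv a x" "weak_conv b y"
  shows "weak_conv (\<lambda>n. a n + b n) (x + y)"
  using assms unfolding weak_conv_def by (auto simp: inner_add_left intro: tendsto_add)

lemma weak_conv_diff:
  assumes "weak_conv a x" "weak_conv b y"
  shows "weak_conv (\<lambda>n. a n - b n) (x - y)"
  using assms unfolding weak_conv_def by (auto simp: inner_diff_left intro: tendsto_diff)

lemma weak_seq_contD:
  assumes "weak_seq_cont F" "weak_conv xs x"
  shows "weak_conv (\<lambda>n. F (xs n)) (F x)"
  using assms unfolding weak_seq_cont_def by blast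

text \<open>\<open>2\<langle>w\<^sub>n, a\<rangle> - \<parallel>a\<parallel>\<^sup>2 \<le> \<parallel>w\<^sub>n\<parallel>\<^sup>2\<close>, and the left side converges to \<open>\<parallel>a\<parallel>\<^sup>2\<close>.\<close>
lemma weak_conv_norm_power2_lsc:
  fixes w :: "nat \<Rightarrow> 'a::real_inner"
  assumes "weak_conv w a" "c \<ge> 0"
  shows "ennreal (c * (norm a)\<^sup>2) \<le> liminf (\<lambda>n. ennreal (c * (norm (w n))\<^sup>2))"
proof -
  define g where "g n = c * (2 * inner (w n) a - (norm a)\<^sup>2)" for n
  have "(\<lambda>n. inner (w n) a) \<longlonglongrightarrow> inner a a"
    using assms(1) unfolding weak_conv_def by blast
  then have "g \<longlonglongrightarrow> c * (2 * inner a a - (norm a)\<^sup>2)"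
    unfolding g_def by (intro tendsto_mult_left tendsto_diff tendsto_const)
  then have "(\<lambda>n. ennreal (g n)) \<longlonglongrightarrow> ennreal (c * (norm a)\<^sup>2)"
    by (intro tendsto_ennrealI) (simp add: power2_norm_eq_inner)
  then have "ennreal (c * (norm a)\<^sup>2) = liminf (\<lambda>n. ennreal (g n))"
    by (simp add: lim_imp_Liminf)
  also have "\<dots> \<le> liminf (\<lambda>n. ennreal (c * (norm (w n))\<^sup>2))"
  proof (intro Liminf_mono always_eventually allI ennreal_leI)
    fix n
    have "0 \<le> (norm (w n - a))\<^sup>2"
      by simp
    then have "2 * inner (w n) a - (norm a)\<^sup>2 \<le> (norm (w n))\<^sup>2"
      unfolding power2_norm_eq_inner by (simp add: inner_diff_left inner_diff_right inner_commute)
    then show "g n \<le> c * (norm (w n))\<^sup>2"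
      unfolding g_def using assms(2) by (rule mult_left_mono)
  qed
  finally show ?thesis .
qed

lemma LIMSEQ_if_subseq_subseq:
  fixes X :: "nat \<Rightarrow> 'a::metric_space"
  assumes sub: "\<And>r :: nat \<Rightarrow> nat. strict_mono r \<Longrightarrow> \<exists>r'. strict_mono r' \<and> (X \<circ> r \<circ> r') \<longlonglongrightarrow> L"
  shows "X \<longlonglongrightarrow> L"
proof (rule ccontr)
  assume "\<not> X \<longlonglongrightarrow> L"
  then obtain e where "e > 0" and "infinite {n. e \<le> dist (X n) L}"
    by (auto simp: tendsto_iff not_eventually INFM_iff_infinite cofinite_eq_sequentially[symmetric]
        not_less)
  then obtain r :: "nat \<Rightarrow> nat" where r: "strict_mono r" and far: "\<And>n. e \<le> dist (X (r n)) L"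
    using infinite_enumerate by blast
  obtain r' where "(X \<circ> r \<circ> r') \<longlonglongrightarrow> L"
    using sub[OF r] by blast
  then obtain n where "dist (X (r (r' n))) L < e"
    using \<open>e > 0\<close> by (auto simp: tendsto_iff eventually_sequentially)
  with far show False
    by (simp add: not_less[symmetric])
qed

lemma weak_conv_if_subseq_subseq:
  assumes "\<And>r :: nat \<Rightarrow> nat. strict_mono r \<Longrightarrow> \<exists>r'. strict_mono r' \<and> weak_conv (xs \<circ> r \<circ> r') x"
  shows "weak_conv xs x"
  unfolding weak_conv_def
proof
  fix z
  show "(\<lambda>n. inner (xs n) z) \<longlonglongrightarrow> inner x z"
    using assms unfolding weak_conv_def by (intro LIMSEQ_if_subseq_subseq) (fastforce simp: o_def)
qed

section \<open>Convergence of Tikhonov regularization\<close>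

lemma ennreal_liminf_add_le:
  fixes f g :: "nat \<Rightarrow> ennreal"
  shows "liminf f + liminf g \<le> liminf (\<lambda>n. f n + g n)"
proof -
  have inc: "incseq (\<lambda>n. INF m\<in>{n..}. h m)" for h :: "nat \<Rightarrow> ennreal"
    by (rule incseq_SucI) (auto intro!: INF_superset_mono)
  have "liminf f + liminf g = (SUP n. (INF m\<in>{n..}. f m) + (INF m\<in>{n..}. g m))"
    unfolding liminf_SUP_INF using ennreal_SUP_add[OF inc inc] by simp
  also have "\<dots> \<le> (SUP n. INF m\<in>{n..}. f m + g m)"
    by (intro SUP_mono) (auto intro!: INF_greatest add_mono INF_lower)
  finally show ?thesis
    unfolding liminf_SUP_INF .
qed

lemma ennreal_le_divide_add:
  fixes X Y :: ennreal
  assumes "a > 0" "d \<ge> 0" "ennreal a * X \<le> ennreal d + ennreal a * Y"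
  shows "X \<le> ennreal (d / a) + Y"
proof -
  have inv: "ennreal (1 / a) * ennreal a = 1"
    using assms(1) by (simp add: ennreal_mult[symmetric])
  have "X = ennreal (1 / a) * (ennreal a * X)"
    using inv by (simp add: mult.assoc[symmetric])
  also have "\<dots> \<le> ennreal (1 / a) * (ennreal d + ennreal a * Y)"
    using assms(3) by (rule mult_left_mono) simp
  also have "\<dots> = ennreal (d / a) + Y"
    using inv assms(1,2) by (simp add: distrib_left mult.assoc[symmetric] ennreal_mult[symmetric])
  finally show ?thesis .
qed

locale tikhonov_convergence =
  fixes K :: "'x::real_inner \<Rightarrow> 'y::real_inner"
    and Dist :: "'y \<Rightarrow> 'y \<Rightarrow> ennreal"
    and R :: "'x \<Rightarrow> ennreal"
    and y :: 'y and ys :: "nat \<Rightarrow> 'y"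
    and \<delta> \<alpha> :: "nat \<Rightarrow> real"
    and xs :: "nat \<Rightarrow> 'x"
  assumes K_cont: "weak_seq_cont K"
    and R_lsc: "weak_seq_lsc R"
    and R_sublevel_compact: "\<And>(us :: nat \<Rightarrow> 'x) C. (\<And>n. R (us n) \<le> ennreal C) \<Longrightarrow>
          \<exists>\<sigma> x. strict_mono \<sigma> \<and> weak_conv (us \<circ> \<sigma>) x"
    and Dist_eq_0: "\<And>u. Dist u y = 0 \<Longrightarrow> u = y"
    and Dist_lsc: "\<And>us u vs. weak_conv us u \<Longrightarrow> vs \<longlonglongrightarrow> y \<Longrightarrow>
          Dist u y \<le> liminf (\<lambda>n. Dist (us n) (vs n))"
    and Dist_tendsto_0: "\<And>ws. (\<lambda>n. Dist y (ws n)) \<longlonglongrightarrow> 0 \<Longrightarrow> ws \<longlonglongrightarrow> y"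
    and solvable: "\<exists>x. R x < \<infinity> \<and> K x = y"
    and delta_pos: "\<And>n. \<delta> n > 0" and delta_lim: "\<delta> \<longlonglongrightarrow> 0"
    and data: "\<And>n. Dist y (ys n) \<le> ennreal (\<delta> n)"
    and alpha_pos: "\<And>n. \<alpha> n > 0" and alpha_lim: "\<alpha> \<longlonglongrightarrow> 0"
    and ratio_lim: "(\<lambda>n. \<delta> n / \<alpha> n) \<longlonglongrightarrow> 0"
    and minimizer: "\<And>n z. Dist (K (xs n)) (ys n) + ennreal (\<alpha> n) * R (xs n)
          \<le> Dist (K z) (ys n) + ennreal (\<alpha> n) * R z"
begin

lemma data_tendsto: "ys \<longlonglongrightarrow> y"
proof (rule Dist_tendsto_0)
  have delta: "(\<lambda>n. ennreal (\<delta> n)) \<longlonglongrightarrow> 0"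
    using tendsto_ennrealI[OF delta_lim] by simp
  show "(\<lambda>n. Dist y (ys n)) \<longlonglongrightarrow> 0"
  proof (rule tendsto_sandwich[OF _ _ tendsto_const delta])
    show "\<forall>\<^sub>F n in sequentially. 0 \<le> Dist y (ys n)"
      by simp
    show "\<forall>\<^sub>F n in sequentially. Dist y (ys n) \<le> ennreal (\<delta> n)"
      by (intro always_eventually allI data)
  qed
qed

lemma tikhonov_value_le:
  assumes "K z = y"
  shows "Dist (K (xs n)) (ys n) + ennreal (\<alpha> n) * R (xs n) \<le> ennreal (\<delta> n) + ennreal (\<alpha> n) * R z"
proof -
  have "Dist (K (xs n)) (ys n) + ennreal (\<alpha> n) * R (xs n) \<le> Dist y (ys n) + ennreal (\<alpha> n) * R z"
    using minimizer[of n z] assms by simp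
  also have "\<dots> \<le> ennreal (\<delta> n) + ennreal (\<alpha> n) * R z"
    using data by (rule add_right_mono)
  finally show ?thesis .
qed

lemma regularizer_le:
  assumes "K z = y"
  shows "R (xs n) \<le> ennreal (\<delta> n / \<alpha> n) + R z"
proof (rule ennreal_le_divide_add[OF alpha_pos less_imp_le[OF delta_pos]])
  show "ennreal (\<alpha> n) * R (xs n) \<le> ennreal (\<delta> n) + ennreal (\<alpha> n) * R z"
    using order_trans[OF add_increasing[OF zero_le order_refl] tikhonov_value_le[OF assms]] .
qed

lemma residual_le:
  assumes "K z = y" "R z = ennreal r" "r \<ge> 0"
  shows "Dist (K (xs n)) (ys n) \<le> ennreal (\<delta> n + \<alpha> n * r)"
proof -
  have "Dist (K (xs n)) (ys n) \<le> ennreal (\<delta> n) + ennreal (\<alpha> n) * R z"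
    using order_trans[OF add_increasing2[OF zero_le order_refl] tikhonov_value_le[OF assms(1)]] .
  also have "\<dots> = ennreal (\<delta> n + \<alpha> n * r)"
    using assms(2,3) delta_pos[of n] alpha_pos[of n] by (simp add: ennreal_mult ennreal_plus)
  finally show ?thesis .
qed

lemma finite_value_solution:
  obtains z r where "K z = y" "R z = ennreal r" "r \<ge> 0"
proof -
  obtain z where "R z < \<infinity>" "K z = y"
    using solvable by blast
  then show ?thesis
    using that[of z "enn2real (R z)"] by (simp add: ennreal_enn2real less_top)
qed

lemma regularizer_bounded: "\<exists>C. \<forall>n. R (xs n) \<le> ennreal C"
proof -
  obtain z r where z: "K z = y" "R z = ennreal r" "r \<ge> 0"
    by (rule finite_value_solution)
  have "Bseq (\<lambda>n. \<delta> n / \<alpha> n)"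
    using convergent_imp_Bseq[OF convergentI[OF ratio_lim]] .
  then obtain B where B_norm: "\<And>n. norm (\<delta> n / \<alpha> n) \<le> B"
    by (rule BseqE) blast
  have B: "\<delta> n / \<alpha> n \<le> B" for n
    using abs_le_D1[OF B_norm[of n, unfolded real_norm_def]] .
  have "R (xs n) \<le> ennreal (B + r)" for n
  proof -
    have "R (xs n) \<le> ennreal (\<delta> n / \<alpha> n) + ennreal r"
      using regularizer_le[OF z(1), of n] z(2) by simp
    also have "\<dots> = ennreal (\<delta> n / \<alpha> n + r)"
      using z(3) delta_pos[of n] alpha_pos[of n] by (intro ennreal_plus[symmetric]) simp_all
    also have "\<dots> \<le> ennreal (B + r)"
      using B[of n] by (intro ennreal_leI) simp
    finally show ?thesis .
  qed
  then show ?thesis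
    by blast
qed

lemma limsup_regularizer_le:
  assumes "strict_mono \<tau>" "K z = y"
  shows "limsup (\<lambda>n. R (xs (\<tau> n))) \<le> R z"
proof -
  have "(\<lambda>n. ennreal (\<delta> (\<tau> n) / \<alpha> (\<tau> n)) + R z) \<longlonglongrightarrow> 0 + R z"
    using tendsto_ennrealI[OF LIMSEQ_subseq_LIMSEQ[OF ratio_lim assms(1)]]
    by (intro tendsto_add tendsto_const) (simp add: o_def)
  then have "limsup (\<lambda>n. ennreal (\<delta> (\<tau> n) / \<alpha> (\<tau> n)) + R z) = R z"
    by (simp add: lim_imp_Limsup)
  moreover have "limsup (\<lambda>n. R (xs (\<tau> n))) \<le> limsup (\<lambda>n. ennreal (\<delta> (\<tau> n) / \<alpha> (\<tau> n)) + R z)"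
    using regularizer_le[OF assms(2)] by (intro Limsup_mono always_eventually) simp
  ultimately show ?thesis
    by simp
qed

lemma weak_limit_solves:
  assumes "strict_mono \<tau>" "weak_conv (xs \<circ> \<tau>) x"
  shows "K x = y"
proof -
  obtain z r where z: "K z = y" "R z = ennreal r" "r \<ge> 0"
    by (rule finite_value_solution)
  have "(\<lambda>n. \<delta> (\<tau> n) + \<alpha> (\<tau> n) * r) \<longlonglongrightarrow> 0 + 0 * r"
    using LIMSEQ_subseq_LIMSEQ[OF delta_lim assms(1)] LIMSEQ_subseq_LIMSEQ[OF alpha_lim assms(1)]
    by (intro tendsto_add tendsto_mult tendsto_const) (simp_all add: o_def)
  then have "(\<lambda>n. ennreal (\<delta> (\<tau> n) + \<alpha> (\<tau> n) * r)) \<longlonglongrightarrow> 0"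
    using tendsto_ennrealI by fastforce
  have "Dist (K x) y \<le> liminf (\<lambda>n. Dist (K (xs (\<tau> n))) (ys (\<tau> n)))"
    using Dist_lsc weak_seq_contD[OF K_cont assms(2)] LIMSEQ_subseq_LIMSEQ[OF data_tendsto assms(1)]
    by (simp add: o_def)
  also have "\<dots> \<le> liminf (\<lambda>n. ennreal (\<delta> (\<tau> n) + \<alpha> (\<tau> n) * r))"
    using residual_le[OF z] by (intro Liminf_mono always_eventually allI)
  also have "\<dots> = 0"
    using \<open>(\<lambda>n. ennreal (\<delta> (\<tau> n) + \<alpha> (\<tau> n) * r)) \<longlonglongrightarrow> 0\<close> by (simp add: lim_imp_Liminf)
  finally show ?thesis
    using Dist_eq_0 by simp
qed

lemma weak_limit_regularizer_le:
  assumes "strict_mono \<tau>" "weak_conv (xs \<circ> \<tau>) x" "K z = y"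
  shows "R x \<le> R z"
proof -
  have "R x \<le> liminf (\<lambda>n. R (xs (\<tau> n)))"
    using R_lsc assms(2) unfolding weak_seq_lsc_def by (simp add: o_def)
  also have "\<dots> \<le> limsup (\<lambda>n. R (xs (\<tau> n)))"
    by (simp add: Liminf_le_Limsup)
  also have "\<dots> \<le> R z"
    using assms(1,3) by (rule limsup_regularizer_le)
  finally show ?thesis .
qed

lemma weak_limit_R_minimizing:
  assumes "strict_mono \<tau>" "weak_conv (xs \<circ> \<tau>) x"
  shows "R x < \<infinity> \<and> K x = y \<and> (\<forall>z. K z = y \<longrightarrow> R x \<le> R z)"
  using weak_limit_solves[OF assms] weak_limit_regularizer_le[OF assms] solvable
  by (meson le_less_trans)

lemma weak_limit_regularizer_tendsto:
  assumes "strict_mono \<tau>" "weak_conv (xs \<circ> \<tau>) x"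
  shows "(\<lambda>n. R (xs (\<tau> n))) \<longlonglongrightarrow> R x"
proof -
  have "R x \<le> liminf (\<lambda>n. R (xs (\<tau> n)))"
    using R_lsc assms(2) unfolding weak_seq_lsc_def by (simp add: o_def)
  moreover have "limsup (\<lambda>n. R (xs (\<tau> n))) \<le> R x"
    using assms(1) weak_limit_solves[OF assms] by (rule limsup_regularizer_le)
  moreover have "liminf (\<lambda>n. R (xs (\<tau> n))) \<le> limsup (\<lambda>n. R (xs (\<tau> n)))"
    by (simp add: Liminf_le_Limsup)
  ultimately show ?thesis
    by (intro Liminf_eq_Limsup) auto
qed

lemma subseq_has_weak_conv_subseq:
  fixes \<sigma> :: "nat \<Rightarrow> nat"
  assumes "strict_mono \<sigma>"
  shows "\<exists>\<tau> x. strict_mono \<tau> \<and> weak_conv (xs \<circ> \<sigma> \<circ> \<tau>) x"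
proof -
  obtain C where "\<And>n. R (xs (\<sigma> n)) \<le> ennreal C"
    using regularizer_bounded by blast
  then show ?thesis
    using R_sublevel_compact[of "xs \<circ> \<sigma>" C] by (simp add: o_assoc)
qed

lemma ex_weak_acc_point: "\<exists>x. weak_acc_point xs x"
  using subseq_has_weak_conv_subseq[OF strict_mono_id] unfolding weak_acc_point_def by auto

lemma weak_conv_unique_R_minimizing:
  assumes unique: "\<And>x. R x < \<infinity> \<and> K x = y \<and> (\<forall>z. K z = y \<longrightarrow> R x \<le> R z) \<Longrightarrow> x = xd"
  shows "weak_conv xs xd"
proof (rule weak_conv_if_subseq_subseq)
  fix r :: "nat \<Rightarrow> nat"
  assume "strict_mono r"
  then obtain \<tau> x where "strict_mono \<tau>" "weak_conv (xs \<circ> r \<circ> \<tau>) x"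
    using subseq_has_weak_conv_subseq by blast
  moreover have "x = xd"
  proof (rule unique)
    show "R x < \<infinity> \<and> K x = y \<and> (\<forall>z. K z = y \<longrightarrow> R x \<le> R z)"
      using weak_limit_R_minimizing[OF strict_mono_o[OF \<open>strict_mono r\<close> \<open>strict_mono \<tau>\<close>]]
        \<open>weak_conv (xs \<circ> r \<circ> \<tau>) x\<close> by (simp add: o_assoc)
  qed
  ultimately show "\<exists>\<tau>. strict_mono \<tau> \<and> weak_conv (xs \<circ> r \<circ> \<tau>) xd"
    by blast
qed

end

lemma weak_seq_lsc_regR:
  fixes E :: "'x::real_inner \<Rightarrow> 'c::real_inner"
  assumes "weak_seq_cont E" "weak_seq_cont Dec" "weak_seq_lsc \<psi>" "c \<ge> 0"
  shows "weak_seq_lsc (regR \<psi> E Dec c)"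
  unfolding weak_seq_lsc_def
proof (intro allI impI)
  fix xs :: "nat \<Rightarrow> 'x" and x
  assume "weak_conv xs x"
  with assms(1) have Ex: "weak_conv (\<lambda>n. E (xs n)) (E x)"
    by (rule weak_seq_contD)
  have "weak_conv (\<lambda>n. xs n - Dec (E (xs n))) (x - Dec (E x))"
    using weak_conv_diff[OF \<open>weak_conv xs x\<close> weak_seq_contD[OF assms(2) Ex]] .
  then have "ennreal (c / 2 * (norm (x - Dec (E x)))\<^sup>2)
      \<le> liminf (\<lambda>n. ennreal (c / 2 * (norm (xs n - Dec (E (xs n))))\<^sup>2))"
    using assms(4) by (intro weak_conv_norm_power2_lsc) simp_all
  moreover have "\<psi> (E x) \<le> liminf (\<lambda>n. \<psi> (E (xs n)))"
    using assms(3) Ex unfolding weak_seq_lsc_def by blast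
  ultimately show "regR \<psi> E Dec c x \<le> liminf (\<lambda>n. regR \<psi> E Dec c (xs n))"
    unfolding regR_def by (intro order.trans[OF add_mono ennreal_liminf_add_le])
qed

lemma regR_sublevel_weak_conv_subseq:
  fixes E :: "'x::{real_inner, complete_space} \<Rightarrow> 'c::{real_inner, complete_space}"
    and us :: "nat \<Rightarrow> 'x"
  assumes "weak_seq_cont Dec" "coercive_fun \<psi>" "c > 0"
    and bd: "\<And>n. regR \<psi> E Dec c (us n) \<le> ennreal C"
  shows "\<exists>\<sigma> x. strict_mono \<sigma> \<and> weak_conv (us \<circ> \<sigma>) x"
proof -
  define C' where "C' = max C 0"
  have bd': "\<psi> (E (us n)) + ennreal (c / 2 * (norm (us n - Dec (E (us n))))\<^sup>2) \<le> ennreal C'" for n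
    using order_trans[OF bd[of n] ennreal_leI[OF max.cobounded1]] unfolding regR_def C'_def .
  have "\<forall>n. \<psi> (E (us n)) \<le> ennreal C'"
    using order_trans[OF add_increasing2[OF zero_le order_refl] bd'] by blast
  then obtain M where "\<And>n. norm (E (us n)) \<le> M"
    using spec[OF assms(2)[unfolded coercive_fun_def], of "\<lambda>n. E (us n)"] by blast
  then obtain \<sigma> e where \<sigma>: "strict_mono \<sigma>" and E_conv: "weak_conv (\<lambda>n. E (us (\<sigma> n))) e"
    using bounded_imp_weak_conv_subseq[of "\<lambda>n. E (us n)" M] by (auto simp: o_def)
  have Dec_conv: "weak_conv (\<lambda>n. Dec (E (us (\<sigma> n)))) (Dec e)"
    using assms(1) E_conv by (rule weak_seq_contD)
  have "ennreal (c / 2 * (norm (us n - Dec (E (us n))))\<^sup>2) \<le> ennreal C'" for n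
    using order_trans[OF add_increasing[OF zero_le order_refl] bd'[of n]] .
  then have "c / 2 * (norm (us n - Dec (E (us n))))\<^sup>2 \<le> C'" for n
    by (subst (asm) ennreal_le_iff) (simp_all add: C'_def)
  then have "norm (us n - Dec (E (us n))) \<le> sqrt (2 * C' / c)" for n
    using \<open>c > 0\<close> by (intro real_le_rsqrt) (simp add: field_simps)
  then obtain \<tau> w where \<tau>: "strict_mono \<tau>"
    and "weak_conv (\<lambda>n. us (\<sigma> (\<tau> n)) - Dec (E (us (\<sigma> (\<tau> n))))) w"
    using bounded_imp_weak_conv_subseq[of "\<lambda>n. us (\<sigma> n) - Dec (E (us (\<sigma> n)))" "sqrt (2 * C' / c)"]
    by (auto simp: o_def)
  from weak_conv_add[OF this(2) weak_conv_subseq[OF Dec_conv \<tau>]]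
  have "weak_conv (us \<circ> (\<sigma> \<circ> \<tau>)) (w + Dec e)"
    by (simp add: o_def)
  with strict_mono_o[OF \<sigma> \<tau>] show ?thesis
    by blast
qed

lemma R_min_sol_iff:
  "R_min_sol K \<psi> E Dec c y x \<longleftrightarrow>
     regR \<psi> E Dec c x < \<infinity> \<and> K x = y \<and> (\<forall>z. K z = y \<longrightarrow> regR \<psi> E Dec c x \<le> regR \<psi> E Dec c z)"
  unfolding R_min_sol_def domR_def by auto (metis less_top top.extremum)

text \<open>(B4) and (B5) serve existence and stability of minimizers.\<close>
theorem mainTheorem7:
  fixes K :: "'x::{real_inner, complete_space} \<Rightarrow> 'y::{real_inner, complete_space}"
    and E :: "'x \<Rightarrow> 'c::{real_inner, complete_space, second_countable_topology}"
    and Dec :: "'c \<Rightarrow> 'x"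
    and \<psi> :: "'c \<Rightarrow> ennreal"
    and c :: real
    and Dist :: "'y \<Rightarrow> 'y \<Rightarrow> ennreal"
    and y :: 'y and ys :: "nat \<Rightarrow> 'y"
    and \<delta> \<alpha> :: "nat \<Rightarrow> real"
    and xs :: "nat \<Rightarrow> 'x"
  assumes A3: "weak_seq_cont K"
    and A4: "weak_seq_cont E"
    and A5: "weak_seq_cont Dec"
    and A6: "coercive_fun \<psi>" "weak_seq_lsc \<psi>"
    and c_pos: "c > 0"
    and B1: "\<And>y0 y1. Dist y0 y1 = 0 \<longleftrightarrow> y0 = y1"
    and B2: "\<And>us u vs v. weak_conv us u \<Longrightarrow> vs \<longlonglongrightarrow> v \<Longrightarrow>
               Dist u v \<le> liminf (\<lambda>n. Dist (us n) (vs n))"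
    and B3: "\<And>w ws. (\<lambda>n. Dist w (ws n)) \<longlonglongrightarrow> 0 \<Longrightarrow> ws \<longlonglongrightarrow> w"
    and B4: "\<And>w ws z. (\<lambda>n. Dist w (ws n)) \<longlonglongrightarrow> 0 \<Longrightarrow> Dist z w < \<infinity> \<Longrightarrow>
               (\<lambda>n. Dist z (ws n)) \<longlonglongrightarrow> Dist z w"
    and B5: "\<And>w a. a > 0 \<Longrightarrow> \<exists>x. tikh Dist K \<psi> E Dec c a w x < \<infinity>"
    and y_range: "y \<in> K ` domR \<psi> E Dec c"
    and delta_pos: "\<And>n. \<delta> n > 0" and delta_lim: "\<delta> \<longlonglongrightarrow> 0"
    and data: "\<And>n. Dist y (ys n) \<le> ennreal (\<delta> n)"
    and alpha_pos: "\<And>n. \<alpha> n > 0" and alpha_lim: "\<alpha> \<longlonglongrightarrow> 0"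
    and ratio_lim: "(\<lambda>n. \<delta> n / \<alpha> n) \<longlonglongrightarrow> 0"
    and minim: "\<And>n. xs n \<in> argmin (tikh Dist K \<psi> E Dec c (\<alpha> n) (ys n))"
  shows "(\<exists>x. weak_acc_point xs x)
    \<and> (\<forall>x. weak_acc_point xs x \<longrightarrow> R_min_sol K \<psi> E Dec c y x)
    \<and> (\<forall>\<tau> x. strict_mono \<tau> \<and> weak_conv (xs \<circ> \<tau>) x \<longrightarrow>
          (\<lambda>n. regR \<psi> E Dec c (xs (\<tau> n))) \<longlonglongrightarrow> regR \<psi> E Dec c x)
    \<and> (\<forall>xd. R_min_sol K \<psi> E Dec c y xd \<and> (\<forall>z. R_min_sol K \<psi> E Dec c y z \<longrightarrow> z = xd)
          \<longrightarrow> weak_conv xs xd)"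
proof -
  interpret tikhonov_convergence K Dist "regR \<psi> E Dec c" y ys \<delta> \<alpha> xs
  proof
    show "weak_seq_lsc (regR \<psi> E Dec c)"
      using A4 A5 A6(2) c_pos by (intro weak_seq_lsc_regR) simp_all
    show "\<exists>\<sigma> x. strict_mono \<sigma> \<and> weak_conv (us \<circ> \<sigma>) x"
      if "\<And>n. regR \<psi> E Dec c (us n) \<le> ennreal C" for us :: "nat \<Rightarrow> 'x" and C
      using A5 A6(1) c_pos that by (rule regR_sublevel_weak_conv_subseq)
    show "\<exists>x. regR \<psi> E Dec c x < \<infinity> \<and> K x = y"
      using y_range unfolding domR_def by blast
    show "Dist (K (xs n)) (ys n) + ennreal (\<alpha> n) * regR \<psi> E Dec c (xs n)
        \<le> Dist (K z) (ys n) + ennreal (\<alpha> n) * regR \<psi> E Dec c z" for n z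
      using minim[of n] unfolding argmin_def tikh_def by blast
  qed (use A3 B1 B2 B3 delta_pos delta_lim data alpha_pos alpha_lim ratio_lim in auto)
  have "\<forall>x. weak_acc_point xs x \<longrightarrow> R_min_sol K \<psi> E Dec c y x"
    unfolding weak_acc_point_def R_min_sol_iff using weak_limit_R_minimizing by blast
  moreover have "\<forall>\<tau> x. strict_mono \<tau> \<and> weak_conv (xs \<circ> \<tau>) x \<longrightarrow>
      (\<lambda>n. regR \<psi> E Dec c (xs (\<tau> n))) \<longlonglongrightarrow> regR \<psi> E Dec c x"
    using weak_limit_regularizer_tendsto by blast
  moreover have "\<forall>xd. R_min_sol K \<psi> E Dec c y xd \<and> (\<forall>z. R_min_sol K \<psi> E Dec c y z \<longrightarrow> z = xd)
      \<longrightarrow> weak_conv xs xd"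
    unfolding R_min_sol_iff using weak_conv_unique_R_minimizing by blast
  ultimately show ?thesis
    using ex_weak_acc_point by blast
qed

end
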